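(* Let $M=(Q,\underline q,\Sigma_I,\Sigma_O,h)$ be a deterministic, completely specified prime FSM with $n=|Q|\ge 2$ states and output function $\omega_M$, and let $R=R(q_1,x_1,Z_1)\wedge\dots\wedge R(q_k,x_k,Z_k)$ be a composite requirement on $M$ (with the pairs $(q_i,x_i)$ pairwise distinct, $\omega_M(q_i,x_i)\in Z_i\subsetneq\Sigma_O$). Let $M_1$ be the requirement abstraction of $M$, let $V\subseteq\Sigma_I^*$ with $\varepsilon\in V$ be a state cover of $M$, let $m\ge n$ be an integer, and let $A,B,C$, $\Delta_M$, $\Delta_{M_1}$, $A(M)$, $B(M_1)$, $C(M_1)$ be as defined in the context. Let $S=(S,\underline s,\Sigma_I,\Sigma_O,h_S)$ be a minimal, completely specified DFSM with $|S|\le m$. Let $TS\subseteq\Sigma_I^*$ be any test suite satisfying (1) $V.\bigcup_{i=0}^{m-n+1}\Sigma_I^i\subseteq TS$, and (2) for all $(\alpha,\beta)\in A(M)\cup B(M_1)\cup C(M_1)$ there exists $\gamma\in\Delta_M(\alpha,\beta)$ with $\alpha.\gamma\in TS$ and $\beta.\gamma\in TS$. Then if $S$ passes $TS$ (i.e. $\omega_S(\underline s,\bar x)=\omega_M(\underline q,\bar x)$ for every $\bar x\in TS$), it follows that $S\models R$.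
   Context: FSMs, DFSMs, languages, the extended transition/output functions $\delta,\omega$, the notation $q\text{-after-}\bar x=\delta(q,\bar x)$ and prime machines are as usual: a completely specified DFSM has for every (state,input) exactly one transition, given by $\delta(q,x)$ and output $\omega(q,x)$; these extend to input sequences by $\delta(q,\varepsilon)=q$, $\delta(q,x.\bar x)=\delta(\delta(q,x),\bar x)$, $\omega(q,\varepsilon)=\varepsilon$, $\omega(q,x.\bar x)=\omega(q,x).\omega(\delta(q,x),\bar x)$. A prime machine has minimal number of states among language-equivalent DFSMs. A state cover of $M$ is a set $V\subseteq\Sigma_I^*$ such that every state $q$ equals $\underline q\text{-after-}v$ for some $v\in V$. For sets of traces, $X.Y=\{x.y\mid x\in X,y\in Y\}$. Requirements: $\Pi(q)=\{\bar x\in\Sigma_I^*\mid \underline q\text{-after-}\bar x=q\}$ (computed in $M$). $S\models R(q,x,Z)$ iff $\omega_S(\underline s\text{-after-}\pi,x)\in Z$ for all $\pi\in\Pi(q)$; $S\models R$ for a conjunction iff $S$ satisfies every conjunct. Requirement abstraction $M_1$: the completely specified DFSM with state set $Q$, initial state $\underline q$, input alphabet $\Sigma_I$, output alphabet $\{\ast,Z_1,\dots,Z_k\}$ where $\ast=\Sigma_O$, transition function equal to that of $M$, and output function $\omega_{M_1}(q_i,x_i)=Z_i$ for $i=1,\dots,k$ and $\omega_{M_1}(q,x)=\ast$ for all other $(q,x)\in Q\times\Sigma_I$. Trace-pair sets: $A=V\times V$; $B=V\times\big(V.\bigcup_{i=1}^{m-n+1}\Sigma_I^i\big)$; $C=\{(\alpha,\beta)\mid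 \alpha$ is a prefix of $\beta$, $\alpha,\beta\in V.\bigcup_{i=1}^{m-n+1}\Sigma_I^i\}$. For input traces $\alpha,\beta$: $\Delta_M(\alpha,\beta)=\{\gamma\in\Sigma_I^*\mid\omega_M(\underline q\text{-after-}\alpha,\gamma)\ne\omega_M(\underline q\text{-after-}\beta,\gamma)\}$ and $\Delta_{M_1}(\alpha,\beta)$ is defined analogously with $\omega_{M_1}$. For a set $P$ of trace pairs, $P(M)=\{(\alpha,\beta)\in P\mid\Delta_M(\alpha,\beta)\neq\varnothing\}$ and $P(M_1)=\{(\alpha,\beta)\in P\mid\Delta_{M_1}(\alpha,\beta)\neq\varnothing\}$. *)

theory Defs
  imports Main
begin

text \<open>The input alphabet is UNIV of the (finite) input type, the output
alphabet is UNIV of the (finite) output type.\<close>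

definition dfsm :: "'s set \<Rightarrow> 's \<Rightarrow> ('s \<Rightarrow> 'i \<Rightarrow> 's) \<Rightarrow> ('s \<Rightarrow> 'i \<Rightarrow> 'o) \<Rightarrow> bool" where
  "dfsm Q q0 d w \<longleftrightarrow> finite Q \<and> q0 \<in> Q \<and> (\<forall>q\<in>Q. \<forall>x. d q x \<in> Q)"

fun delta_star :: "('s \<Rightarrow> 'i \<Rightarrow> 's) \<Rightarrow> 's \<Rightarrow> 'i list \<Rightarrow> 's" where
  "delta_star d q [] = q"
| "delta_star d q (x # xs) = delta_star d (d q x) xs"

fun omega_star :: "('s \<Rightarrow> 'i \<Rightarrow> 's) \<Rightarrow> ('s \<Rightarrow> 'i \<Rightarrow> 'o) \<Rightarrow> 's \<Rightarrow> 'i list \<Rightarrow> 'o list" where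
  "omega_star d w q [] = []"
| "omega_star d w q (x # xs) = w q x # omega_star d w (d q x) xs"

definition fsm_lang :: "'s \<Rightarrow> ('s \<Rightarrow> 'i \<Rightarrow> 's) \<Rightarrow> ('s \<Rightarrow> 'i \<Rightarrow> 'o) \<Rightarrow> ('i \<times> 'o) list set" where
  "fsm_lang q0 d w = {zip xs (omega_star d w q0 xs) | xs. True}"

text \<open>Prime / minimal: minimal number of states among all language-equivalent
DFSMs (competitors are taken with states in nat, which loses no generality
since every finite state set can be relabelled into nat).\<close>
definition prime_dfsm :: "'s set \<Rightarrow> 's \<Rightarrow> ('s \<Rightarrow> 'i \<Rightarrow> 's) \<Rightarrow> ('s \<Rightarrow> 'i \<Rightarrow> 'o) \<Rightarrow> bool" where
  "prime_dfsm Q q0 d w \<longleftrightarrow> dfsm Q q0 d w \<and>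
     (\<forall>(Q'::nat set) q0' d' (w' :: nat \<Rightarrow> 'i \<Rightarrow> 'o).
        dfsm Q' q0' d' w' \<and> fsm_lang q0' d' w' = fsm_lang q0 d w \<longrightarrow> card Q \<le> card Q')"

definition state_cover :: "'i list set \<Rightarrow> 's set \<Rightarrow> 's \<Rightarrow> ('s \<Rightarrow> 'i \<Rightarrow> 's) \<Rightarrow> bool" where
  "state_cover V Q q0 d \<longleftrightarrow> (\<forall>q\<in>Q. \<exists>v\<in>V. delta_star d q0 v = q)"

definition Pi_set :: "'s \<Rightarrow> ('s \<Rightarrow> 'i \<Rightarrow> 's) \<Rightarrow> 's \<Rightarrow> 'i list set" where
  "Pi_set q0 d q = {xs. delta_star d q0 xs = q}"

definition sat_req :: "'t \<Rightarrow> ('t \<Rightarrow> 'i \<Rightarrow> 't) \<Rightarrow> ('t \<Rightarrow> 'i \<Rightarrow> 'o)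
     \<Rightarrow> 's \<Rightarrow> ('s \<Rightarrow> 'i \<Rightarrow> 's) \<Rightarrow> ('s \<times> 'i \<times> 'o set) \<Rightarrow> bool" where
  "sat_req s0 dS wS q0 d r = (case r of (q, x, Z) \<Rightarrow>
     (\<forall>\<pi>\<in>Pi_set q0 d q. wS (delta_star dS s0 \<pi>) x \<in> Z))"

definition sat_reqs :: "'t \<Rightarrow> ('t \<Rightarrow> 'i \<Rightarrow> 't) \<Rightarrow> ('t \<Rightarrow> 'i \<Rightarrow> 'o)
     \<Rightarrow> 's \<Rightarrow> ('s \<Rightarrow> 'i \<Rightarrow> 's) \<Rightarrow> ('s \<times> 'i \<times> 'o set) list \<Rightarrow> bool" where
  "sat_reqs s0 dS wS q0 d R \<longleftrightarrow> (\<forall>r\<in>set R. sat_req s0 dS wS q0 d r)"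

text \<open>Requirement abstraction: output function of M1 (outputs are sets of outputs;
* = UNIV = Sigma_O). Transitions of M1 equal those of M.\<close>
definition abs_output :: "('s \<times> 'i \<times> 'o set) list \<Rightarrow> 's \<Rightarrow> 'i \<Rightarrow> 'o set" where
  "abs_output R q x = (case map_of (map (\<lambda>(q, x, Z). ((q, x), Z)) R) (q, x) of
       Some Z \<Rightarrow> Z | None \<Rightarrow> UNIV)"

definition ext_set :: "'i list set \<Rightarrow> nat \<Rightarrow> nat \<Rightarrow> 'i list set" where
  "ext_set V lo hi = {v @ u | v u. v \<in> V \<and> lo \<le> length u \<and> length u \<le> hi}"

definition Delta :: "'s \<Rightarrow> ('s \<Rightarrow> 'i \<Rightarrow> 's) \<Rightarrow> ('s \<Rightarrow> 'i \<Rightarrow> 'o) \<Rightarrow> 'i list \<Rightarrow> 'i list \<Rightarrow> 'i list set" where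
  "Delta q0 d w \<alpha> \<beta> = {\<gamma>. omega_star d w (delta_star d q0 \<alpha>) \<gamma> \<noteq> omega_star d w (delta_star d q0 \<beta>) \<gamma>}"

definition pairs_A :: "'i list set \<Rightarrow> ('i list \<times> 'i list) set" where
  "pairs_A V = V \<times> V"

definition pairs_B :: "'i list set \<Rightarrow> nat \<Rightarrow> nat \<Rightarrow> ('i list \<times> 'i list) set" where
  "pairs_B V m n = V \<times> ext_set V 1 (m - n + 1)"

definition pairs_C :: "'i list set \<Rightarrow> nat \<Rightarrow> nat \<Rightarrow> ('i list \<times> 'i list) set" where
  "pairs_C V m n = {(\<alpha>, \<beta>). (\<exists>u. \<beta> = \<alpha> @ u) \<and> \<alpha> \<in> ext_set V 1 (m - n + 1) \<and> \<beta> \<in> ext_set V 1 (m - n + 1)}"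

definition distinguished :: "('i list \<times> 'i list) set \<Rightarrow> 's \<Rightarrow> ('s \<Rightarrow> 'i \<Rightarrow> 's) \<Rightarrow> ('s \<Rightarrow> 'i \<Rightarrow> 'o)
     \<Rightarrow> ('i list \<times> 'i list) set" where
  "distinguished P q0 d w = {(\<alpha>, \<beta>) \<in> P. Delta q0 d w \<alpha> \<beta> \<noteq> {}}"

definition passes :: "'t \<Rightarrow> ('t \<Rightarrow> 'i \<Rightarrow> 't) \<Rightarrow> ('t \<Rightarrow> 'i \<Rightarrow> 'o)
     \<Rightarrow> 's \<Rightarrow> ('s \<Rightarrow> 'i \<Rightarrow> 's) \<Rightarrow> ('s \<Rightarrow> 'i \<Rightarrow> 'o) \<Rightarrow> 'i list set \<Rightarrow> bool" where
  "passes s0 dS wS q0 d w TS \<longleftrightarrow> (\<forall>xs\<in>TS. omega_star dS wS s0 xs = omega_star d w q0 xs)"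

end

theory Submission
  imports Defs
begin

text \<open>Suppose S violates R. Then after some input sequence S produces, on some input,
an output outside the set allowed by the requirement abstraction M1; choose such a
sequence of the form v.u with v in V and u as short as possible. Since TS contains
V.(Sigma_I^0 \<union> ... \<union> Sigma_I^k) for k = m - n + 1, we get |u| \<ge> k. Consider the states of
S reached by the elements of V and by v.u', where u' ranges over the prefixes of u of
length 1, ..., k. Any two of them are distinct: if M (for two elements of V) or M1 (in
the other cases) distinguishes the two traces, then so does TS in S; if M1 does not,
the violation could be moved to a shorter suffix. Hence S has at least n + k = m + 1
states.\<close>

lemma delta_star_append:
  "delta_star d q (xs @ ys) = delta_star d (delta_star d q xs) ys"
  by (induction xs arbitrary: q) auto

lemma omega_star_append:
  "omega_star d w q (xs @ ys) = omega_star d w q xs @ omega_star d w (delta_star d q xs) ys"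
  by (induction xs arbitrary: q) auto

lemma length_omega_star: "length (omega_star d w q xs) = length xs"
  by (induction xs arbitrary: q) auto

lemma delta_star_in_states: "dfsm Q q0 d w \<Longrightarrow> q \<in> Q \<Longrightarrow> delta_star d q xs \<in> Q"
  by (induction xs arbitrary: q) (auto simp: dfsm_def)

lemma passes_omega_star_suffix:
  assumes "passes s0 dS wS q0 d w TS" and "\<sigma> @ \<gamma> \<in> TS"
  shows "omega_star dS wS (delta_star dS s0 \<sigma>) \<gamma> = omega_star d w (delta_star d q0 \<sigma>) \<gamma>"
proof -
  have "omega_star dS wS s0 (\<sigma> @ \<gamma>) = omega_star d w q0 (\<sigma> @ \<gamma>)"
    using assms by (auto simp: passes_def)
  then show ?thesis
    unfolding omega_star_append by (metis append_eq_append_conv length_omega_star)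
qed

lemma passes_separates_states:
  assumes "passes s0 dS wS q0 d w TS"
    and "\<gamma> \<in> Delta q0 d w \<alpha> \<beta>" "\<alpha> @ \<gamma> \<in> TS" "\<beta> @ \<gamma> \<in> TS"
  shows "delta_star dS s0 \<alpha> \<noteq> delta_star dS s0 \<beta>"
  using passes_omega_star_suffix[OF assms(1,3)] passes_omega_star_suffix[OF assms(1,4)] assms(2)
  by (auto simp: Delta_def)

lemma dfsm_relabel_nat:
  assumes "dfsm Q q0 d (w :: 's \<Rightarrow> 'i \<Rightarrow> 'o)"
  shows "\<exists>(Q'::nat set) q0' d' (w'::nat \<Rightarrow> 'i \<Rightarrow> 'o). dfsm Q' q0' d' w' \<and>
           fsm_lang q0' d' w' = fsm_lang q0 d w \<and> card Q' = card Q"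
proof -
  from assms have fin: "finite Q" and q0: "q0 \<in> Q" and closed: "\<And>q x. q \<in> Q \<Longrightarrow> d q x \<in> Q"
    by (auto simp: dfsm_def)
  then obtain g :: "'s \<Rightarrow> nat" and N where "g ` Q = {i. i < N}" and inj: "inj_on g Q"
    using finite_imp_inj_to_nat_seg by blast
  define h where "h = the_inv_into Q g"
  have hg: "q \<in> Q \<Longrightarrow> h (g q) = q" for q
    using the_inv_into_f_f[OF inj] h_def by simp
  define d' where "d' i x = g (d (h i) x)" for i x
  define w' where "w' i x = w (h i) x" for i x
  have omega: "q \<in> Q \<Longrightarrow> omega_star d' w' (g q) xs = omega_star d w q xs" for q xs
    by (induction xs arbitrary: q) (simp_all add: d'_def w'_def hg closed)
  have "dfsm (g ` Q) (g q0) d' w'"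
    unfolding dfsm_def using fin q0 closed hg d'_def by auto
  moreover have "fsm_lang (g q0) d' w' = fsm_lang q0 d w"
    unfolding fsm_lang_def using omega q0 by simp
  moreover have "card (g ` Q) = card Q"
    using card_image[OF inj] .
  ultimately show ?thesis by blast
qed

text \<open>Otherwise redirecting every transition into p' to the equivalent state p would
yield a language-equivalent machine with one state less.\<close>

lemma prime_dfsm_distinguishable:
  assumes prime: "prime_dfsm Q q0 d w" and "p \<in> Q" "p' \<in> Q" "p \<noteq> p'"
  shows "\<exists>\<gamma>. omega_star d w p \<gamma> \<noteq> omega_star d w p' \<gamma>"
proof (rule ccontr)
  assume "\<not> ?thesis"
  then have equiv: "\<And>\<gamma>. omega_star d w p \<gamma> = omega_star d w p' \<gamma>" by auto
  define f where "f s = (if s = p' then p else s)" for s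
  define d1 where "d1 q x = f (d q x)" for q x
  have omega_f: "omega_star d w (f s) ys = omega_star d w s ys" for s ys
    using equiv f_def by auto
  have omega_d1: "omega_star d1 w q xs = omega_star d w q xs" for q xs
    by (induction xs arbitrary: q) (auto simp: d1_def omega_f)
  have M: "dfsm Q q0 d w"
    using prime by (simp add: prime_dfsm_def)
  have "dfsm (Q - {p'}) (f q0) d1 w"
    using M assms(2-4) unfolding dfsm_def d1_def f_def by auto
  moreover have "fsm_lang (f q0) d1 w = fsm_lang q0 d w"
    unfolding fsm_lang_def omega_d1 omega_f ..
  ultimately obtain Q' :: "nat set" and q0' d' w' where
    "dfsm Q' q0' d' w'" "fsm_lang q0' d' w' = fsm_lang q0 d w" "card Q' = card (Q - {p'})"
    using dfsm_relabel_nat by metis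
  with prime have "card Q \<le> card (Q - {p'})"
    unfolding prime_dfsm_def by metis
  moreover have "finite Q"
    using M by (simp add: dfsm_def)
  ultimately show False
    using assms(3) card_Diff1_less[of Q p'] by simp
qed

lemma cover_states_inj_on:
  assumes prime: "prime_dfsm Q q0 d w"
    and rep: "\<And>q. q \<in> Q \<Longrightarrow> rep q \<in> V \<and> delta_star d q0 (rep q) = q"
    and sep: "\<forall>(\<alpha>, \<beta>) \<in> distinguished (pairs_A V) q0 d w.
                delta_star dS s0 \<alpha> \<noteq> delta_star dS s0 \<beta>"
  shows "inj_on (\<lambda>q. delta_star dS s0 (rep q)) Q"
proof (rule inj_onI, rule ccontr)
  fix p p' assume "p \<in> Q" "p' \<in> Q" "p \<noteq> p'"
    and same: "delta_star dS s0 (rep p) = delta_star dS s0 (rep p')"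
  with prime_dfsm_distinguishable[OF prime] rep
  have "(rep p, rep p') \<in> distinguished (pairs_A V) q0 d w"
    by (auto simp: distinguished_def pairs_A_def Delta_def)
  with sep same show False by blast
qed

lemma output_mem_abs_output:
  assumes "\<forall>(q, x, Z) \<in> set R. q \<in> Q \<and> w q x \<in> Z \<and> Z \<subset> UNIV"
  shows "w q x \<in> abs_output R q x"
proof (cases "map_of (map (\<lambda>(q, x, Z). ((q, x), Z)) R) (q, x)")
  case None
  then show ?thesis by (simp add: abs_output_def)
next
  case (Some Z)
  then have "((q, x), Z) \<in> set (map (\<lambda>(q, x, Z). ((q, x), Z)) R)"
    by (rule map_of_SomeD)
  with assms Some show ?thesis by (auto simp: abs_output_def)
qed

lemma abs_output_req:
  assumes "distinct (map (\<lambda>(q, x, Z). (q, x)) R)" and "(q, x, Z) \<in> set R"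
  shows "abs_output R q x = Z"
proof -
  have "map fst (map (\<lambda>(q, x, Z). ((q, x), Z)) R) = map (\<lambda>(q, x, Z). (q, x)) R"
    by (induction R) auto
  with assms(1) have "distinct (map fst (map (\<lambda>(q, x, Z). ((q, x), Z)) R))"
    by (simp only:)
  moreover have "((q, x), Z) \<in> set (map (\<lambda>(q, x, Z). ((q, x), Z)) R)"
    using assms(2) by force
  ultimately show ?thesis
    by (simp add: abs_output_def map_of_is_SomeI)
qed

text \<open>W plays the role of the output function of M1 (it is instantiated with abs_output R),
whose transitions are those of M.\<close>

definition abstraction_violated ::
    "'t \<Rightarrow> ('t \<Rightarrow> 'i \<Rightarrow> 't) \<Rightarrow> ('t \<Rightarrow> 'i \<Rightarrow> 'o) \<Rightarrow> 's \<Rightarrow> ('s \<Rightarrow> 'i \<Rightarrow> 's)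
     \<Rightarrow> ('s \<Rightarrow> 'i \<Rightarrow> 'o set) \<Rightarrow> 'i list \<Rightarrow> bool" where
  "abstraction_violated s0 dS wS q0 d W \<sigma> \<longleftrightarrow>
     (\<exists>x. wS (delta_star dS s0 \<sigma>) x \<notin> W (delta_star d q0 \<sigma>) x)"

lemma abstraction_violated_if_not_sat_reqs:
  assumes "distinct (map (\<lambda>(q, x, Z). (q, x)) R)" and "\<not> sat_reqs s0 dS wS q0 d R"
  shows "\<exists>\<pi>. abstraction_violated s0 dS wS q0 d (abs_output R) \<pi>"
  using assms abs_output_req[OF assms(1)]
  by (fastforce simp: sat_reqs_def sat_req_def Pi_set_def abstraction_violated_def)

lemma passes_not_abstraction_violated:
  assumes pass: "passes s0 dS wS q0 d w TS" and "\<And>y. \<sigma> @ [y] \<in> TS"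
    and "\<And>q x. w q x \<in> W q x"
  shows "\<not> abstraction_violated s0 dS wS q0 d W \<sigma>"
proof -
  have "wS (delta_star dS s0 \<sigma>) y = w (delta_star d q0 \<sigma>) y" for y
    using passes_omega_star_suffix[OF pass assms(2)] by simp
  with assms(3) show ?thesis
    by (simp add: abstraction_violated_def)
qed

lemma abstraction_violated_transfer:
  assumes "delta_star dS s0 \<sigma> = delta_star dS s0 \<tau>" and "Delta q0 d W \<sigma> \<tau> = {}"
    and "abstraction_violated s0 dS wS q0 d W (\<tau> @ t)"
  shows "abstraction_violated s0 dS wS q0 d W (\<sigma> @ t)"
proof -
  obtain y where y: "wS (delta_star dS s0 (\<tau> @ t)) y \<notin> W (delta_star d q0 (\<tau> @ t)) y"
    using assms(3) by (auto simp: abstraction_violated_def)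
  have "omega_star d W (delta_star d q0 \<sigma>) (t @ [y]) = omega_star d W (delta_star d q0 \<tau>) (t @ [y])"
    using assms(2) by (auto simp: Delta_def)
  then have "W (delta_star d q0 (\<sigma> @ t)) y = W (delta_star d q0 (\<tau> @ t)) y"
    by (simp add: omega_star_append delta_star_append)
  with y assms(1) show ?thesis
    unfolding abstraction_violated_def delta_star_append by metis
qed

lemma shortest_abstraction_violation:
  assumes "v0 \<in> V" and "abstraction_violated s0 dS wS q0 d W (v0 @ u0)"
  obtains v u where "v \<in> V" "abstraction_violated s0 dS wS q0 d W (v @ u)"
    "\<forall>v' \<in> V. \<forall>u'. abstraction_violated s0 dS wS q0 d W (v' @ u') \<longrightarrow> length u \<le> length u'"
proof -
  define P where "P p \<longleftrightarrow> fst p \<in> V \<and> abstraction_violated s0 dS wS q0 d W (fst p @ snd p)" for p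
  have "P (v0, u0)"
    using assms by (simp add: P_def)
  then obtain p where "P p" "\<forall>p'. P p' \<longrightarrow> length (snd p) \<le> length (snd p')"
    using ex_has_least_nat[of P _ "\<lambda>p. length (snd p)"] by blast
  with that show thesis
    unfolding P_def by (cases p) force
qed

context
  fixes s0 :: 't and dS :: "'t \<Rightarrow> 'i \<Rightarrow> 't" and wS :: "'t \<Rightarrow> 'i \<Rightarrow> 'o"
    and q0 :: 's and d :: "'s \<Rightarrow> 'i \<Rightarrow> 's" and W :: "'s \<Rightarrow> 'i \<Rightarrow> 'o set"
    and V :: "'i list set" and v u :: "'i list"
  assumes v_in: "v \<in> V"
    and violated: "abstraction_violated s0 dS wS q0 d W (v @ u)"
    and shortest: "\<forall>v' \<in> V. \<forall>u'. abstraction_violated s0 dS wS q0 d W (v' @ u')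
                     \<longrightarrow> length u \<le> length u'"
begin

lemma state_ne_prefix_state_if_not_distinguished:
  assumes "v' \<in> V" "length u' < l" "l \<le> length u"
    and "Delta q0 d W (v' @ u') (v @ take l u) = {}"
  shows "delta_star dS s0 (v' @ u') \<noteq> delta_star dS s0 (v @ take l u)"
proof
  assume same: "delta_star dS s0 (v' @ u') = delta_star dS s0 (v @ take l u)"
  have "abstraction_violated s0 dS wS q0 d W ((v' @ u') @ drop l u)"
    using abstraction_violated_transfer[OF same assms(4), where t = "drop l u"] violated by simp
  with shortest assms(1) have "length u \<le> length (u' @ drop l u)"
    by (metis append.assoc)
  with assms(2,3) show False by simp
qed

lemma prefix_in_ext_set:
  assumes "k \<le> length u" "j \<in> {1..k}"
  shows "v @ take j u \<in> ext_set V 1 k"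
  unfolding ext_set_def using assms v_in by force

lemma prefix_states_inj_on:
  assumes sep: "\<forall>(\<alpha>, \<beta>) \<in> distinguished (pairs_C V m n) q0 d W.
                  delta_star dS s0 \<alpha> \<noteq> delta_star dS s0 \<beta>"
    and long: "m - n + 1 \<le> length u"
  shows "inj_on (\<lambda>j. delta_star dS s0 (v @ take j u)) {1..m - n + 1}"
proof (rule linorder_inj_onI')
  fix j l assume jl: "j \<in> {1..m - n + 1}" "l \<in> {1..m - n + 1}" "j < l"
  show "delta_star dS s0 (v @ take j u) \<noteq> delta_star dS s0 (v @ take l u)"
  proof (cases "Delta q0 d W (v @ take j u) (v @ take l u) = {}")
    case True
    then show ?thesis
      using state_ne_prefix_state_if_not_distinguished[OF v_in] jl long by simp
  next
    case False
    have "take j u = take j (take l u)"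
      using jl by simp
    then have "v @ take l u = (v @ take j u) @ drop j (take l u)"
      by (metis append.assoc append_take_drop_id)
    then have "(v @ take j u, v @ take l u) \<in> pairs_C V m n"
      using prefix_in_ext_set[OF long] jl unfolding pairs_C_def by blast
    with False sep show ?thesis
      by (auto simp: distinguished_def)
  qed
qed

lemma cover_state_ne_prefix_state:
  assumes sep: "\<forall>(\<alpha>, \<beta>) \<in> distinguished (pairs_B V m n) q0 d W.
                  delta_star dS s0 \<alpha> \<noteq> delta_star dS s0 \<beta>"
    and long: "m - n + 1 \<le> length u"
    and "v' \<in> V" "j \<in> {1..m - n + 1}"
  shows "delta_star dS s0 v' \<noteq> delta_star dS s0 (v @ take j u)"
proof (cases "Delta q0 d W v' (v @ take j u) = {}")
  case True
  then show ?thesis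
    using state_ne_prefix_state_if_not_distinguished[of v' "[]" j] assms(3,4) long by simp
next
  case False
  then have "(v', v @ take j u) \<in> distinguished (pairs_B V m n) q0 d W"
    using prefix_in_ext_set[OF long] assms(3,4) unfolding distinguished_def pairs_B_def by blast
  with sep show ?thesis by blast
qed

end

lemma card_le_of_disjoint_images:
  assumes "finite St" "inj_on f A" "inj_on g B" "f ` A \<inter> g ` B = {}" "f ` A \<union> g ` B \<subseteq> St"
    and "finite A" "finite B"
  shows "card A + card B \<le> card St"
proof -
  have "card A + card B = card (f ` A \<union> g ` B)"
    using assms(2-4,6,7) by (simp add: card_Un_disjoint card_image)
  also have "\<dots> \<le> card St"
    using assms(1,5) by (rule card_mono)
  finally show ?thesis .
qed

theorem theorem2:
  fixes Q :: "'s set" and q0 :: 's and d :: "'s \<Rightarrow> 'i::finite \<Rightarrow> 's" and w :: "'s \<Rightarrow> 'i \<Rightarrow> 'o::finite"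
    and R :: "('s \<times> 'i \<times> 'o set) list"
    and V :: "'i list set" and m :: nat
    and St :: "'t set" and s0 :: 't and dS :: "'t \<Rightarrow> 'i \<Rightarrow> 't" and wS :: "'t \<Rightarrow> 'i \<Rightarrow> 'o"
    and TS :: "'i list set"
  assumes M_prime: "prime_dfsm Q q0 d w"
    and n2: "card Q \<ge> 2"
    and R_distinct: "distinct (map (\<lambda>(q, x, Z). (q, x)) R)"
    and R_wf: "\<forall>(q, x, Z) \<in> set R. q \<in> Q \<and> w q x \<in> Z \<and> Z \<subset> UNIV"
    and V_eps: "[] \<in> V"
    and V_cover: "state_cover V Q q0 d"
    and m_ge: "m \<ge> card Q"
    and S_min: "prime_dfsm St s0 dS wS"
    and S_size: "card St \<le> m"
    and TS1: "ext_set V 0 (m - card Q + 1) \<subseteq> TS"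
    and TS2: "\<forall>(\<alpha>, \<beta>) \<in> distinguished (pairs_A V) q0 d w
                 \<union> distinguished (pairs_B V m (card Q)) q0 d (abs_output R)
                 \<union> distinguished (pairs_C V m (card Q)) q0 d (abs_output R).
               \<exists>\<gamma> \<in> Delta q0 d w \<alpha> \<beta>. \<alpha> @ \<gamma> \<in> TS \<and> \<beta> @ \<gamma> \<in> TS"
    and pass: "passes s0 dS wS q0 d w TS"
  shows "sat_reqs s0 dS wS q0 d R"
proof (rule ccontr)
  let ?k = "m - card Q + 1" and ?S = "delta_star dS s0"
  assume "\<not> sat_reqs s0 dS wS q0 d R"
  with abstraction_violated_if_not_sat_reqs[OF R_distinct] V_eps
  obtain v u where v: "v \<in> V" and violated: "abstraction_violated s0 dS wS q0 d (abs_output R) (v @ u)"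
    and shortest: "\<forall>v' \<in> V. \<forall>u'. abstraction_violated s0 dS wS q0 d (abs_output R) (v' @ u')
                     \<longrightarrow> length u \<le> length u'"
    by (metis append_Nil shortest_abstraction_violation)
  have long: "?k \<le> length u"
  proof (rule ccontr)
    assume "\<not> ?k \<le> length u"
    then have "(v @ u) @ [y] \<in> TS" for y
      using TS1 v unfolding ext_set_def by force
    with passes_not_abstraction_violated[OF pass] output_mem_abs_output[OF R_wf] violated
    show False by blast
  qed
  have sepA: "\<forall>(\<alpha>, \<beta>) \<in> distinguished (pairs_A V) q0 d w. ?S \<alpha> \<noteq> ?S \<beta>"
    and sepB: "\<forall>(\<alpha>, \<beta>) \<in> distinguished (pairs_B V m (card Q)) q0 d (abs_output R). ?S \<alpha> \<noteq> ?S \<beta>"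
    and sepC: "\<forall>(\<alpha>, \<beta>) \<in> distinguished (pairs_C V m (card Q)) q0 d (abs_output R). ?S \<alpha> \<noteq> ?S \<beta>"
    using TS2 passes_separates_states[OF pass] by blast+
  obtain rep where rep: "\<And>q. q \<in> Q \<Longrightarrow> rep q \<in> V \<and> delta_star d q0 (rep q) = q"
    using V_cover unfolding state_cover_def by metis
  have S: "dfsm St s0 dS wS" and M: "dfsm Q q0 d w"
    using S_min M_prime by (simp_all add: prime_dfsm_def)
  have "card Q + card {1..?k} \<le> card St"
  proof (rule card_le_of_disjoint_images)
    show "inj_on (\<lambda>q. ?S (rep q)) Q"
      using cover_states_inj_on[OF M_prime rep sepA] .
    show "inj_on (\<lambda>j. ?S (v @ take j u)) {1..?k}"
      using prefix_states_inj_on[OF v violated shortest sepC long] .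
    show "(\<lambda>q. ?S (rep q)) ` Q \<inter> (\<lambda>j. ?S (v @ take j u)) ` {1..?k} = {}"
      using cover_state_ne_prefix_state[OF v violated shortest sepB long] rep by blast
    show "(\<lambda>q. ?S (rep q)) ` Q \<union> (\<lambda>j. ?S (v @ take j u)) ` {1..?k} \<subseteq> St"
      using delta_star_in_states[OF S] S by (auto simp: dfsm_def)
  qed (use S M in \<open>simp_all add: dfsm_def\<close>)
  with S_size m_ge show False by simp
qed

end
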